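(* Consider the principal–agent model described in the context. Let $(a^{\mathcal J},u^{\mathcal J})$ be a maximizer of $\max_{(a,u)\in\mathcal{J}}\{\mathbb{E}[X(a)\mid a]-c(a)-u\}$. Suppose the quota-bonus contract $s_q(x)=b\,\mathbf{1}_{\{x\ge q\}}$ (with $q,b\in[0,\infty)$) implements $(a^{\mathcal J},u^{\mathcal J})$. Then $b=\dfrac{c(a^{\mathcal J})+u^{\mathcal J}}{1-F(q\mid a^{\mathcal J})}$, and either $q=L(a^{\mathcal J})$, or $q>L(a^{\mathcal J})$ and \[ \frac{-F_a(q\mid a^{\mathcal J})}{1-F(q\mid a^{\mathcal J})}=\frac{c'(a^{\mathcal J})}{c(a^{\mathcal J})+u^{\mathcal J}}. \]
   Context: Model. An agent chooses effort $a\ge 0$. The outcome $X(a)$ is a continuous random variable with support $[L(a),\bar x]$, where $\bar x>0$ is fixed (possibly $+\infty$) and $L:[0,\infty)\to[0,\bar x)$ is nondecreasing on $[0,\infty)$ and continuously differentiable on $(0,\infty)$. Effort costs $c(a)$, where $c:[0,\infty)\to[0,\infty)$ is twice differentiable with $c'(a)>0$, $c''(a)\ge 0$. $X(a)$ has density $f(x\mid a)$ and cdf $F(x\mid a)$; for each fixed $x\in(L(a),\bar x]$, $f(x\mid a)$ and $F(x\mid a)$ are differentiable in $a>0$ with derivatives $f_a,F_a$, both continuous on $(L(a),\bar x]\times(0,\infty)$, and $F_a<0$ there. A contract is $s:\mathbb{R}_{\ge0}\to\mathbb{R}_{\ge0}$ (LL: $s\ge0$). $E^P(a,s)=\int_{L(a)}^{\bar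 x}[x-s(x)]f(x\mid a)\,dx$, $E^A(a,s)=\int_{L(a)}^{\bar x}s(x)f(x\mid a)\,dx-c(a)$, reservation utility $u_0\ge0$. Constraints: (IC) the chosen effort $a_s\in\arg\max_{a\ge0}E^A(a,s)$; (IR) $E^A(a_s,s)\ge u_0$; (LL). Indifferent agents choose the effort most favorable to the principal. Standing assumption: (i) $\mathbb{E}[X(a)\mid a]<\infty$ for all $a\ge0$ and is continuous in $a$ on $[0,\infty)$; (ii) $\lim_{a\to\infty}\{\mathbb{E}[X(a)\mid a]-c(a)\}=-\infty$; (iii) $a\mapsto\sup_{x\in(L(a),\bar x]}f_a(x\mid a)/f(x\mid a)$ is continuous on $(0,\infty)$; (iv) for any contract $s$ with $\mathbb{E}[s(X(a))\mid a]<\infty$, the limit $h\uparrow0$ of $\int_{L(a)}^{\bar x}\frac{f(x\mid a+h)-f(x\mid a)}{h}s(x)\,dx$ may be taken inside the integral. A contract $s$ implements $(a,u)$ if $(a,s)$ satisfies IC, IR, LL and $u=E^A(a,s)$. $\mathcal{J}=\{(a,u)\mid a>0,\ u\ge u_0,\ \sup_{x\in(L(a),\bar x]} f_a(x\mid a)/f(x\mid a)\ge c'(a)/(c(a)+u)\}\cup\{(0,u)\mid u\ge u_0\}$. *)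

theory Defs
  imports "HOL-Analysis.Analysis" "HOL-Analysis.Interval_Integral"
begin

text \<open>Outcome density f x a (outcome x, effort a), cdf F x a,
  lower support end L a, upper support end xbar (an extended real, possibly \<infinity>),
  cost c with derivative dc and second derivative ddc, partial derivatives in effort
  fa = f_a and Fa = F_a.\<close>

definition supp_int :: "(real \<Rightarrow> real) \<Rightarrow> ereal \<Rightarrow> real \<Rightarrow> real set" where
  "supp_int L xbar a = {x. L a < x \<and> ereal x \<le> xbar}"

definition EXP :: "(real \<Rightarrow> real) \<Rightarrow> ereal \<Rightarrow> (real \<Rightarrow> real \<Rightarrow> real) \<Rightarrow> real \<Rightarrow> real" where
  "EXP L xbar f a = (interval_lebesgue_integral lborel (ereal (L a)) xbar (\<lambda>x. x * f x a))"

definition EA :: "(real \<Rightarrow> real) \<Rightarrow> ereal \<Rightarrow> (real \<Rightarrow> real \<Rightarrow> real) \<Rightarrow> (real \<Rightarrow> real)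
    \<Rightarrow> real \<Rightarrow> (real \<Rightarrow> real) \<Rightarrow> real" where
  "EA L xbar f c a s = (interval_lebesgue_integral lborel (ereal (L a)) xbar (\<lambda>x. s x * f x a)) - c a"

definition EP :: "(real \<Rightarrow> real) \<Rightarrow> ereal \<Rightarrow> (real \<Rightarrow> real \<Rightarrow> real)
    \<Rightarrow> real \<Rightarrow> (real \<Rightarrow> real) \<Rightarrow> real" where
  "EP L xbar f a s = (interval_lebesgue_integral lborel (ereal (L a)) xbar (\<lambda>x. (x - s x) * f x a))"

text \<open>Contract s implements (a,u): IC (with tie-breaking in favour of the principal), IR, LL.\<close>
definition implements :: "(real \<Rightarrow> real) \<Rightarrow> ereal \<Rightarrow> (real \<Rightarrow> real \<Rightarrow> real) \<Rightarrow> (real \<Rightarrow> real)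
    \<Rightarrow> real \<Rightarrow> (real \<Rightarrow> real) \<Rightarrow> real \<Rightarrow> real \<Rightarrow> bool" where
  "implements L xbar f c u0 s a u \<longleftrightarrow>
     (\<forall>x\<ge>0. 0 \<le> s x) \<and> 0 \<le> a \<and>
     (\<forall>a'\<ge>0. EA L xbar f c a' s \<le> EA L xbar f c a s) \<and>
     (\<forall>a'\<ge>0. EA L xbar f c a' s = EA L xbar f c a s \<longrightarrow> EP L xbar f a' s \<le> EP L xbar f a s) \<and>
     u0 \<le> EA L xbar f c a s \<and> u = EA L xbar f c a s"

definition JSet :: "(real \<Rightarrow> real) \<Rightarrow> ereal \<Rightarrow> (real \<Rightarrow> real \<Rightarrow> real) \<Rightarrow> (real \<Rightarrow> real \<Rightarrow> real)
    \<Rightarrow> (real \<Rightarrow> real) \<Rightarrow> (real \<Rightarrow> real) \<Rightarrow> real \<Rightarrow> (real \<times> real) set" where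
  "JSet L xbar f fa c dc u0 =
     {(a, u). a > 0 \<and> u \<ge> u0 \<and>
        (SUP x\<in>supp_int L xbar a. ereal (fa x a / f x a)) \<ge> ereal (dc a / (c a + u))}
     \<union> {(0, u) | u. u \<ge> u0}"

definition pa_model :: "(real \<Rightarrow> real) \<Rightarrow> ereal \<Rightarrow> (real \<Rightarrow> real \<Rightarrow> real) \<Rightarrow> (real \<Rightarrow> real \<Rightarrow> real)
    \<Rightarrow> (real \<Rightarrow> real \<Rightarrow> real) \<Rightarrow> (real \<Rightarrow> real \<Rightarrow> real)
    \<Rightarrow> (real \<Rightarrow> real) \<Rightarrow> (real \<Rightarrow> real) \<Rightarrow> (real \<Rightarrow> real) \<Rightarrow> real \<Rightarrow> bool" where
  "pa_model L xbar f F fa Fa c dc ddc u0 \<longleftrightarrow>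
     \<comment> \<open>upper end of support\<close>
     xbar > 0 \<and>
     \<comment> \<open>lower end of support L\<close>
     (\<forall>a\<ge>0. 0 \<le> L a \<and> ereal (L a) < xbar) \<and> mono_on {0..} L \<and>
     (\<exists>L'. (\<forall>a>0. (L has_real_derivative L' a) (at a)) \<and> continuous_on {0<..} L') \<and>
     \<comment> \<open>cost\<close>
     (\<forall>a\<ge>0. 0 \<le> c a \<and> (c has_real_derivative dc a) (at a within {0..}) \<and>
        (dc has_real_derivative ddc a) (at a within {0..}) \<and> dc a > 0 \<and> ddc a \<ge> 0) \<and>
     \<comment> \<open>X(a) is continuous with density f(.|a), support [L a, xbar], cdf F(.|a)\<close>
     (\<forall>a\<ge>0. (\<forall>x. 0 \<le> f x a) \<and> (\<forall>x. x \<notin> supp_int L xbar a \<and> x \<noteq> L a \<longrightarrow> f x a = 0) \<and>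
        (\<forall>x\<in>supp_int L xbar a. 0 < f x a) \<and>
        integrable lborel (\<lambda>x. f x a) \<and> (LINT x|lborel. f x a) = 1 \<and>
        (\<forall>q. F q a = (LINT x:{..q}|lborel. f x a))) \<and>
     \<comment> \<open>differentiability in effort\<close>
     (\<forall>a>0. \<forall>x\<in>supp_int L xbar a.
        ((\<lambda>b. f x b) has_real_derivative fa x a) (at a) \<and>
        ((\<lambda>b. F x b) has_real_derivative Fa x a) (at a) \<and> Fa x a < 0) \<and>
     continuous_on {(x, a). a > 0 \<and> x \<in> supp_int L xbar a} (\<lambda>(x, a). fa x a) \<and>
     continuous_on {(x, a). a > 0 \<and> x \<in> supp_int L xbar a} (\<lambda>(x, a). Fa x a) \<and>
     \<comment> \<open>(i)\<close>
     (\<forall>a\<ge>0. interval_lebesgue_integrable lborel (ereal (L a)) xbar (\<lambda>x. x * f x a)) \<and>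
     continuous_on {0..} (EXP L xbar f) \<and>
     \<comment> \<open>(ii)\<close>
     filterlim (\<lambda>a. EXP L xbar f a - c a) at_bot at_top \<and>
     \<comment> \<open>(iii)\<close>
     continuous_on {0<..} (\<lambda>a. SUP x\<in>supp_int L xbar a. ereal (fa x a / f x a)) \<and>
     \<comment> \<open>(iv)\<close>
     (\<forall>s a. a > 0 \<longrightarrow> (\<forall>x\<ge>0. 0 \<le> s x) \<longrightarrow>
        interval_lebesgue_integrable lborel (ereal (L a)) xbar (\<lambda>x. s x * f x a) \<longrightarrow>
        interval_lebesgue_integrable lborel (ereal (L a)) xbar (\<lambda>x. fa x a * s x) \<and>
        ((\<lambda>h. interval_lebesgue_integral lborel (ereal (L a)) xbar (\<lambda>x. (f x (a + h) - f x a) / h * s x))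
           \<longlongrightarrow> (interval_lebesgue_integral lborel (ereal (L a)) xbar (\<lambda>x. fa x a * s x))) (at_left 0)) \<and>
     \<comment> \<open>reservation utility\<close>
     u0 \<ge> 0"

end

theory Submission
  imports Defs
begin

text \<open>Under the quota-bonus contract the agent's payoff is \<open>b (1 - F(q|a)) - c(a)\<close>, and the
  incentive constraint says that \<open>a\<^sup>J > 0\<close> maximises it over \<open>a \<ge> 0\<close>. If \<open>F(q|a\<^sup>J) = 1\<close>, zero effort would be strictly
  better, so \<open>F(q|a\<^sup>J) < 1\<close> and \<open>u\<^sup>J = b (1 - F(q|a\<^sup>J)) - c(a\<^sup>J)\<close> determines \<open>b\<close>. A quota
  below \<open>L(a\<^sup>J)\<close> stays below \<open>L(a)\<close> for slightly smaller efforts \<open>a\<close>, which keep the bonus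
  certain at a lower cost. For \<open>q > L(a\<^sup>J)\<close> the quota lies in the support, the payoff is
  differentiable at the interior maximiser \<open>a\<^sup>J\<close>, and its first-order condition
  \<open>-b F\<^sub>a(q|a\<^sup>J) = c'(a\<^sup>J)\<close>, divided by \<open>c(a\<^sup>J) + u\<^sup>J = b (1 - F(q|a\<^sup>J))\<close>, is the claim.\<close>

definition quota_bonus :: "real \<Rightarrow> real \<Rightarrow> real \<Rightarrow> real" where
  "quota_bonus q b x = (if q \<le> x then b else 0)"

lemma interval_integral_eq_integral_if_vanishing_outside:
  fixes g :: "real \<Rightarrow> real"
  assumes g: "g \<in> borel_measurable lborel"
    and below: "\<And>x. x < l \<Longrightarrow> g x = 0"
    and above: "\<And>x. xbar < ereal x \<Longrightarrow> g x = 0"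
    and l_xbar: "ereal l < xbar"
  shows "interval_lebesgue_integral lborel (ereal l) xbar g = integral\<^sup>L lborel g"
proof -
  have "AE x in lborel. indicator (einterval l xbar) x *\<^sub>R g x = g x"
    using AE_lborel_singleton[of l] AE_lborel_singleton[of "real_of_ereal xbar"]
  proof eventually_elim
    case (elim x)
    show ?case
    proof (cases "x \<in> einterval l xbar")
      case False
      with elim have "x < l \<or> xbar < ereal x"
        by (cases xbar) (auto simp: einterval_def)
      with below above show ?thesis by auto
    qed simp
  qed
  then have "(LINT x|lborel. indicator (einterval l xbar) x *\<^sub>R g x) = integral\<^sup>L lborel g"
    by (rule integral_cong_AE[rotated 2]) (use g in auto)
  then show ?thesis
    using l_xbar by (simp add: interval_lebesgue_integral_def set_lebesgue_integral_def)
qed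

lemma integral_quota_bonus:
  fixes g :: "real \<Rightarrow> real"
  assumes g: "integrable lborel g"
  shows "(LINT x|lborel. quota_bonus q b x * g x)
           = b * (integral\<^sup>L lborel g - (LINT x:{..q}|lborel. g x))"
proof -
  have g_atMost: "integrable lborel (\<lambda>x. indicator {..q} x *\<^sub>R g x)"
    using g by (rule integrable_mult_indicator[rotated]) simp
  have [measurable]: "g \<in> borel_measurable lborel"
    using g by auto
  have "AE x in lborel. quota_bonus q b x * g x = b * g x - b * (indicator {..q} x *\<^sub>R g x)"
    using AE_lborel_singleton[of q]
    by eventually_elim (auto simp: quota_bonus_def indicator_def)
  then have "(LINT x|lborel. quota_bonus q b x * g x)
               = (LINT x|lborel. b * g x - b * (indicator {..q} x *\<^sub>R g x))"
    by (intro integral_cong_AE) (auto simp: quota_bonus_def)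
  also have "\<dots> = b * (integral\<^sup>L lborel g - (LINT x:{..q}|lborel. g x))"
    using g g_atMost by (simp add: set_lebesgue_integral_def right_diff_distrib)
  finally show ?thesis .
qed

lemma set_integral_atMost_le_integral:
  fixes g :: "real \<Rightarrow> real"
  assumes "\<And>x. 0 \<le> g x" and g: "integrable lborel g"
  shows "(LINT x:{..q}|lborel. g x) \<le> integral\<^sup>L lborel g"
proof -
  have "integrable lborel (\<lambda>x. indicator {..q} x *\<^sub>R g x)"
    using g by (rule integrable_mult_indicator[rotated]) simp
  then show ?thesis
    unfolding set_lebesgue_integral_def
    by (rule integral_mono[OF _ g]) (use assms in \<open>auto simp: indicator_def\<close>)
qed

lemma set_integral_atMost_eq_0:
  fixes g :: "real \<Rightarrow> real"
  assumes "\<And>x. x < l \<Longrightarrow> g x = 0" and "q < l"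
  shows "(LINT x:{..q}|lborel. g x) = 0"
proof -
  have "(\<lambda>x. indicator {..q} x *\<^sub>R g x) = (\<lambda>x. 0)"
    using assms by (auto simp: fun_eq_iff indicator_def)
  then show ?thesis
    by (simp add: set_lebesgue_integral_def)
qed

lemma set_integral_atMost_eq_integral:
  fixes g :: "real \<Rightarrow> real"
  assumes above: "\<And>x. xbar < ereal x \<Longrightarrow> g x = 0" and "xbar < ereal q"
  shows "(LINT x:{..q}|lborel. g x) = integral\<^sup>L lborel g"
proof -
  have "(\<lambda>x. indicator {..q} x *\<^sub>R g x) = g"
  proof
    fix x
    show "indicator {..q} x *\<^sub>R g x = g x"
    proof (cases "x \<le> q")
      case False
      then have "xbar < ereal x"
        using \<open>xbar < ereal q\<close> by (simp add: less_trans[of xbar "ereal q"])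
      then show ?thesis by (simp add: above)
    qed simp
  qed
  then show ?thesis
    by (simp add: set_lebesgue_integral_def)
qed

lemma strict_mono_on_if_DERIV_pos:
  fixes c dc :: "real \<Rightarrow> real"
  assumes deriv: "\<And>a. l \<le> a \<Longrightarrow> (c has_real_derivative dc a) (at a within {l..})"
    and pos: "\<And>a. l \<le> a \<Longrightarrow> 0 < dc a"
  shows "strict_mono_on {l..} c"
proof (rule strict_mono_onI)
  have cont: "continuous_on {l..} c"
    unfolding continuous_on_eq_continuous_within by (auto intro: DERIV_continuous deriv)
  fix x y :: real
  assume "x \<in> {l..}" "x < y"
  show "c x < c y"
  proof (rule DERIV_pos_imp_increasing_open[OF \<open>x < y\<close>])
    fix z assume "x < z" "z < y"
    with \<open>x \<in> {l..}\<close> have "l < z" by simp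
    then have "at z within {l..} = at z"
      by (intro at_within_interior) simp
    with deriv pos \<open>l < z\<close> show "\<exists>l. DERIV c z :> l \<and> 0 < l"
      by (metis less_imp_le)
  qed (use cont \<open>x \<in> {l..}\<close> in \<open>auto intro: continuous_on_subset\<close>)
qed

locale quota_bonus_IC =
  fixes L :: "real \<Rightarrow> real" and xbar :: ereal and f F fa Fa :: "real \<Rightarrow> real \<Rightarrow> real"
    and c dc ddc :: "real \<Rightarrow> real" and u0 q b aJ :: real
  assumes model: "pa_model L xbar f F fa Fa c dc ddc u0"
    and effort_pos: "0 < aJ"
    and bonus_nonneg: "0 \<le> b"
    and IC: "\<And>a. 0 \<le> a \<Longrightarrow> EA L xbar f c a (quota_bonus q b) \<le> EA L xbar f c aJ (quota_bonus q b)"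
begin

lemma density_facts:
  assumes "0 \<le> a"
  shows density_nonneg: "0 \<le> f x a"
    and density_vanishes_below: "x < L a \<Longrightarrow> f x a = 0"
    and density_vanishes_above: "xbar < ereal x \<Longrightarrow> f x a = 0"
    and density_integrable: "integrable lborel (\<lambda>x. f x a)"
    and density_integral: "(LINT x|lborel. f x a) = 1"
    and cdf_eq: "F q a = (LINT x:{..q}|lborel. f x a)"
    and support_nonempty: "ereal (L a) < xbar"
proof -
  have support: "ereal (L a) < xbar"
    and density: "(\<forall>x. 0 \<le> f x a) \<and> (\<forall>x. x \<notin> supp_int L xbar a \<and> x \<noteq> L a \<longrightarrow> f x a = 0) \<and>
        integrable lborel (\<lambda>x. f x a) \<and> (LINT x|lborel. f x a) = 1 \<and>
        (\<forall>q. F q a = (LINT x:{..q}|lborel. f x a))"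
    using model assms by (simp_all add: pa_model_def)
  then show "0 \<le> f x a" "integrable lborel (\<lambda>x. f x a)" "(LINT x|lborel. f x a) = 1"
    "F q a = (LINT x:{..q}|lborel. f x a)" "ereal (L a) < xbar"
    by blast+
  show "x < L a \<Longrightarrow> f x a = 0"
    using density by (auto simp: supp_int_def)
  show "f x a = 0" if "xbar < ereal x"
  proof -
    have "x \<notin> supp_int L xbar a" "x \<noteq> L a"
      using that less_trans[OF support that] by (auto simp: supp_int_def)
    with density show ?thesis by blast
  qed
qed

lemma model_facts:
  shows cost_has_derivative: "0 \<le> a \<Longrightarrow> (c has_real_derivative dc a) (at a within {0..})"
    and cost_derivative_pos: "0 \<le> a \<Longrightarrow> 0 < dc a"
    and support_min_differentiable: "0 < a \<Longrightarrow> L differentiable (at a)"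
    and cdf_has_derivative:
      "0 < a \<Longrightarrow> x \<in> supp_int L xbar a \<Longrightarrow> ((\<lambda>a. F x a) has_real_derivative Fa x a) (at a)"
proof -
  have cost: "\<forall>a\<ge>0. 0 \<le> c a \<and> (c has_real_derivative dc a) (at a within {0..}) \<and>
        (dc has_real_derivative ddc a) (at a within {0..}) \<and> dc a > 0 \<and> ddc a \<ge> 0"
    and L: "\<exists>L'. (\<forall>a>0. (L has_real_derivative L' a) (at a)) \<and> continuous_on {0<..} L'"
    and F: "\<forall>a>0. \<forall>x\<in>supp_int L xbar a.
        ((\<lambda>b. f x b) has_real_derivative fa x a) (at a) \<and>
        ((\<lambda>b. F x b) has_real_derivative Fa x a) (at a) \<and> Fa x a < 0"
    using model by (simp_all add: pa_model_def)
  show "0 \<le> a \<Longrightarrow> (c has_real_derivative dc a) (at a within {0..})" "0 \<le> a \<Longrightarrow> 0 < dc a"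
    using cost by blast+
  show "0 < a \<Longrightarrow> L differentiable (at a)"
    using L by (auto simp: real_differentiable_def)
  show "0 < a \<Longrightarrow> x \<in> supp_int L xbar a \<Longrightarrow> ((\<lambda>a. F x a) has_real_derivative Fa x a) (at a)"
    using F by blast
qed

lemma EA_quota_bonus:
  assumes "0 \<le> a"
  shows "EA L xbar f c a (quota_bonus q b) = b * (1 - F q a) - c a"
proof -
  have [measurable]: "(\<lambda>x. f x a) \<in> borel_measurable lborel"
    using density_integrable[OF assms] by auto
  have "interval_lebesgue_integral lborel (ereal (L a)) xbar (\<lambda>x. quota_bonus q b x * f x a)
          = (LINT x|lborel. quota_bonus q b x * f x a)"
    by (rule interval_integral_eq_integral_if_vanishing_outside)
      (auto simp: quota_bonus_def assms density_vanishes_below density_vanishes_above support_nonempty)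
  then show ?thesis
    using assms by (simp add: EA_def integral_quota_bonus density_integrable density_integral cdf_eq)
qed

lemma payoff_le_payoff_aJ:
  assumes "0 \<le> a"
  shows "b * (1 - F q a) - c a \<le> b * (1 - F q aJ) - c aJ"
  using IC[OF assms] EA_quota_bonus[OF assms] EA_quota_bonus effort_pos by simp

lemma cdf_le_one: "0 \<le> a \<Longrightarrow> F q a \<le> 1"
  using set_integral_atMost_le_integral[of "\<lambda>x. f x a"]
  by (simp add: density_nonneg density_integrable density_integral cdf_eq)

lemma cost_strict_mono: "strict_mono_on {0..} c"
  by (rule strict_mono_on_if_DERIV_pos[OF cost_has_derivative cost_derivative_pos])

lemma cdf_quota_lt_one: "F q aJ < 1"
proof (rule ccontr)
  assume "\<not> F q aJ < 1"
  then have "F q aJ = 1"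
    using cdf_le_one[of aJ] effort_pos by simp
  then have "b * (1 - F q aJ) - c aJ = - c aJ"
    by simp
  also have "\<dots> < - c 0"
    using strict_mono_onD[OF cost_strict_mono, of 0 aJ] effort_pos by simp
  also have "\<dots> \<le> b * (1 - F q 0) - c 0"
    using cdf_le_one[of 0] bonus_nonneg by simp
  finally show False
    using payoff_le_payoff_aJ[of 0] by simp
qed

lemma support_min_le_quota: "L aJ \<le> q"
proof (rule ccontr)
  assume "\<not> L aJ \<le> q"
  then have "q < L aJ" by simp
  have "isCont L aJ"
    using support_min_differentiable[OF effort_pos] by (rule differentiable_imp_continuous_within)
  then have "\<forall>\<^sub>F a in at_left aJ. q < L a"
    using \<open>q < L aJ\<close> by (intro order_tendstoD(1)) (auto simp: isCont_def filterlim_at_split)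
  moreover have "\<forall>\<^sub>F a in at_left aJ. a \<in> {0<..<aJ}"
    using effort_pos by (rule eventually_at_left_real)
  ultimately have "\<forall>\<^sub>F a in at_left aJ. q < L a \<and> a \<in> {0<..<aJ}"
    by (rule eventually_conj)
  then obtain a where a: "q < L a" "0 < a" "a < aJ"
    using eventually_happens'[of "at_left aJ"] by auto
  have "F q a = 0" "F q aJ = 0"
    using a \<open>q < L aJ\<close> effort_pos
    by (auto simp: cdf_eq intro!: set_integral_atMost_eq_0 density_vanishes_below)
  moreover have "c a < c aJ"
    using strict_mono_onD[OF cost_strict_mono] a by simp
  ultimately show False
    using payoff_le_payoff_aJ[of a] a by simp
qed

lemma quota_le_support_max: "ereal q \<le> xbar"
proof (rule ccontr)
  assume "\<not> ereal q \<le> xbar"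
  then have "F q aJ = (LINT x|lborel. f x aJ)"
    using effort_pos unfolding cdf_eq[OF less_imp_le[OF effort_pos]]
    by (intro set_integral_atMost_eq_integral[of xbar]) (auto intro: density_vanishes_above)
  with cdf_quota_lt_one density_integral[of aJ] effort_pos show False by simp
qed

lemma first_order_condition:
  assumes "L aJ < q"
  shows "- b * Fa q aJ = dc aJ"
proof -
  have "q \<in> supp_int L xbar aJ"
    using assms quota_le_support_max by (simp add: supp_int_def)
  then have dF: "((\<lambda>a. F q a) has_real_derivative Fa q aJ) (at aJ)"
    using effort_pos by (rule cdf_has_derivative[rotated])
  have "(c has_real_derivative dc aJ) (at aJ within {0..})"
    using effort_pos by (simp add: cost_has_derivative)
  moreover have "at aJ within {0..} = at aJ"
    using effort_pos by (intro at_within_interior) simp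
  ultimately have dc: "(c has_real_derivative dc aJ) (at aJ)"
    by simp
  have "((\<lambda>a. b * (1 - F q a) - c a) has_real_derivative b * (0 - Fa q aJ) - dc aJ) (at aJ)"
    by (intro DERIV_diff DERIV_cmult DERIV_const dF dc)
  then have "b * (0 - Fa q aJ) - dc aJ = 0"
    by (rule DERIV_local_max[OF _ effort_pos]) (auto intro: payoff_le_payoff_aJ)
  then show ?thesis by simp
qed

end

theorem lemma1:
  fixes L c dc ddc :: "real \<Rightarrow> real" and f F fa Fa :: "real \<Rightarrow> real \<Rightarrow> real"
    and xbar :: ereal and u0 aJ uJ q b :: real
  assumes model: "pa_model L xbar f F fa Fa c dc ddc u0"
    and inJ: "(aJ, uJ) \<in> JSet L xbar f fa c dc u0"
    and maxJ: "\<forall>(a, u) \<in> JSet L xbar f fa c dc u0.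
                 EXP L xbar f a - c a - u \<le> EXP L xbar f aJ - c aJ - uJ"
    and aJ_pos: "aJ > 0"
    and q: "q \<ge> 0" and b: "b \<ge> 0"
    and impl: "implements L xbar f c u0 (\<lambda>x. if q \<le> x then b else 0) aJ uJ"
  shows "b = (c aJ + uJ) / (1 - F q aJ) \<and>
         (q = L aJ \<or>
          (q > L aJ \<and> - Fa q aJ / (1 - F q aJ) = dc aJ / (c aJ + uJ)))"
proof -
  have contract: "(\<lambda>x. if q \<le> x then b else 0) = quota_bonus q b"
    by (simp add: fun_eq_iff quota_bonus_def)
  interpret quota_bonus_IC L xbar f F fa Fa c dc ddc u0 q b aJ
    using model aJ_pos b impl by unfold_locales (auto simp: implements_def contract)
  have utility: "c aJ + uJ = b * (1 - F q aJ)"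
    using impl EA_quota_bonus aJ_pos by (simp add: implements_def contract)
  then have bonus: "b = (c aJ + uJ) / (1 - F q aJ)"
    using cdf_quota_lt_one by simp
  have "- Fa q aJ / (1 - F q aJ) = dc aJ / (c aJ + uJ)" if "L aJ < q"
  proof -
    have foc: "- b * Fa q aJ = dc aJ"
      using that by (rule first_order_condition)
    with cost_derivative_pos[of aJ] aJ_pos have "b \<noteq> 0" by auto
    then show ?thesis
      by (simp add: utility foc[symmetric])
  qed
  with bonus support_min_le_quota show ?thesis
    by fastforce
qed

end
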